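(* Let $X$ be a metric space. (1) If $f_0,f_1\in\mathrm{E}'(X)$ and $\lambda\in(0,1)$, then $f:=(1-\lambda)f_0+\lambda f_1\in\Delta(X)$ and $A(f)=A(f_0)\cap A(f_1)$; so $f\in\mathrm{E}'(X)$ if and only if $\bigcup(A(f_0)\cap A(f_1))=X$. (2) For $A_0,A_1\in\mathscr{A}(X)$ the following are equivalent: (i) $P(A_0)\cup P(A_1)\subset P(A)$ for some $A\in\mathscr A(X)$; (ii) $\bigcup(A_0\cap A_1)=X$; (iii) $A_0\cap A_1\in\mathscr A(X)$. If (i)–(iii) hold and $A\in\mathscr A(X)$ is as in (i), then $P(A_0)\cup P(A_1)\subset P(A_0\cap A_1)\subset P(A)$.
   Context: For $f\colon X\to\mathbb{R}$, $A(f)$ is the set of unordered pairs $\{x,y\}$ ($x=y$ allowed) with $f(x)+f(y)=d(x,y)$. $\Delta(X)=\{f\in\mathbb R^X: f(x)+f(y)\ge d(x,y)\ \forall x,y\}$; $\mathrm{E}'(X)=\{f\in\Delta(X):\bigcup A(f)=X\}$; $\mathscr A(X)=\{A(f): f\in\mathrm{E}'(X)\}$; for $A\in\mathscr A(X)$, $H(A)=\{g\in\mathbb{R}^X: g(x)+g(y)=d(x,y)\ \forall \{x,y\}\in A\}$ and $P(A)=\mathrm{E}'(X)\cap H(A)=\{g\in\mathrm{E}'(X): A\subset A(g)\}$. *)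

theory Defs
  imports "HOL-Analysis.Analysis"
begin

text \<open>The metric space X is the type 'a of class metric_space (X = UNIV), with metric dist.
  Unordered pairs {x,y} (x = y allowed) are represented as sets {x,y}.\<close>

definition Apairs :: "('a::metric_space \<Rightarrow> real) \<Rightarrow> 'a set set" where
  "Apairs f = {{x, y} | x y. f x + f y = dist x y}"

definition Delta :: "('a::metric_space \<Rightarrow> real) set" where
  "Delta = {f. \<forall>x y. dist x y \<le> f x + f y}"

definition Eprime :: "('a::metric_space \<Rightarrow> real) set" where
  "Eprime = {f \<in> Delta. \<Union>(Apairs f) = UNIV}"

definition Ascr :: "'a::metric_space set set set" where
  "Ascr = Apairs ` Eprime"

definition Hset :: "'a::metric_space set set \<Rightarrow> ('a \<Rightarrow> real) set" where
  "Hset A = {g. \<forall>x y. {x, y} \<in> A \<longrightarrow> g x + g y = dist x y}"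

definition Pset :: "'a::metric_space set set \<Rightarrow> ('a \<Rightarrow> real) set" where
  "Pset A = Eprime \<inter> Hset A"

end

theory Submission
  imports Defs
begin

text \<open>A convex combination \<open>f\<close> of \<open>f\<^sub>0, f\<^sub>1 \<in> \<Delta>(X)\<close> with weights in \<open>(0,1)\<close> lies in \<open>\<Delta>(X)\<close>,
  and since \<open>f\<^sub>0(x) + f\<^sub>0(y) \<ge> d(x,y)\<close> and \<open>f\<^sub>1(x) + f\<^sub>1(y) \<ge> d(x,y)\<close>, the combination attains
  \<open>d(x,y)\<close> exactly when both do; hence \<open>A(f) = A(f\<^sub>0) \<inter> A(f\<^sub>1)\<close>.
  For part (2), if \<open>A\<^sub>0 = A(g\<^sub>0)\<close> then \<open>g\<^sub>0 \<in> P(A\<^sub>0)\<close>, so \<open>P(A\<^sub>0) \<subseteq> P(A)\<close> forces \<open>A \<subseteq> A(g\<^sub>0) = A\<^sub>0\<close>: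
  the inclusions of (i) are equivalent to \<open>A \<subseteq> A\<^sub>0 \<inter> A\<^sub>1\<close>, and a midpoint of \<open>g\<^sub>0, g\<^sub>1\<close> realises
  \<open>A\<^sub>0 \<inter> A\<^sub>1\<close> by part (1).\<close>

lemma convex_comb_eq_lower_bound_iff:
  fixes a u v lam :: real
  assumes "a \<le> u" "a \<le> v" "0 < lam" "lam < 1"
  shows "a \<le> (1 - lam) * u + lam * v"
    and "(1 - lam) * u + lam * v = a \<longleftrightarrow> u = a \<and> v = a"
proof -
  have u: "(1 - lam) * a \<le> (1 - lam) * u" and v: "lam * a \<le> lam * v"
    using assms by (auto intro: mult_left_mono)
  then show "a \<le> (1 - lam) * u + lam * v"
    by (simp add: algebra_simps)
  show "(1 - lam) * u + lam * v = a \<longleftrightarrow> u = a \<and> v = a"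
  proof
    assume eq: "(1 - lam) * u + lam * v = a"
    have "a = (1 - lam) * a + lam * a" by (simp add: algebra_simps)
    then have "(1 - lam) * a = (1 - lam) * u" "lam * a = lam * v"
      using eq u v by linarith+
    then show "u = a \<and> v = a"
      using assms(3,4) by auto
  qed (simp add: algebra_simps)
qed

lemma Apairs_iff: "{x, y} \<in> Apairs f \<longleftrightarrow> f x + f y = dist x y"
proof
  assume "{x, y} \<in> Apairs f"
  then obtain a b where "{x, y} = {a, b}" "f a + f b = dist a b"
    unfolding Apairs_def by blast
  then show "f x + f y = dist x y"
    by (auto simp: doubleton_eq_iff dist_commute add.commute)
qed (auto simp: Apairs_def)

lemma Apairs_elemE:
  assumes "S \<in> Apairs f"
  obtains x y where "S = {x, y}"
  using assms unfolding Apairs_def by blast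

lemma Apairs_eqI:
  assumes "\<And>x y. f x + f y = dist x y \<longleftrightarrow> g x + g y = dist x y \<and> h x + h y = dist x y"
  shows "Apairs f = Apairs g \<inter> Apairs h"
proof (intro equalityI subsetI)
  fix S assume S: "S \<in> Apairs f"
  then obtain x y where "S = {x, y}" by (rule Apairs_elemE)
  with S assms show "S \<in> Apairs g \<inter> Apairs h" by (simp add: Apairs_iff)
next
  fix S assume S: "S \<in> Apairs g \<inter> Apairs h"
  then obtain x y where "S = {x, y}" by (blast elim: Apairs_elemE)
  with S assms show "S \<in> Apairs f" by (simp add: Apairs_iff)
qed

lemma convex_comb_in_Delta_and_Apairs:
  assumes "f0 \<in> Delta" "f1 \<in> Delta" "0 < lam" "lam < 1"
  defines "f \<equiv> \<lambda>x. (1 - lam) * f0 x + lam * f1 x"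
  shows "f \<in> Delta" and "Apairs f = Apairs f0 \<inter> Apairs f1"
proof -
  have sum: "f x + f y = (1 - lam) * (f0 x + f0 y) + lam * (f1 x + f1 y)" for x y
    unfolding f_def by (simp add: algebra_simps)
  have bounds: "dist x y \<le> f0 x + f0 y" "dist x y \<le> f1 x + f1 y" for x y
    using assms(1,2) unfolding Delta_def by auto
  note comb = convex_comb_eq_lower_bound_iff[OF bounds assms(3,4)]
  show "f \<in> Delta"
    unfolding Delta_def by (simp add: sum comb(1))
  show "Apairs f = Apairs f0 \<inter> Apairs f1"
    by (rule Apairs_eqI) (auto simp: sum comb(2))
qed

lemma Eprime_imp_Delta: "f \<in> Eprime \<Longrightarrow> f \<in> Delta"
  unfolding Eprime_def by blast

lemma Union_Ascr: "A \<in> Ascr \<Longrightarrow> \<Union>A = UNIV"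
  unfolding Ascr_def Eprime_def by auto

lemma Pset_antimono: "A \<subseteq> B \<Longrightarrow> Pset B \<subseteq> Pset A"
  unfolding Pset_def Hset_def by blast

lemma Pset_Apairs_self: "g \<in> Eprime \<Longrightarrow> g \<in> Pset (Apairs g)"
  unfolding Pset_def Hset_def by (auto simp: Apairs_iff)

lemma subset_Apairs_if_Pset:
  assumes "g \<in> Pset A" "A \<in> Ascr"
  shows "A \<subseteq> Apairs g"
proof
  fix S assume S: "S \<in> A"
  from assms(2) obtain h where "A = Apairs h" unfolding Ascr_def by blast
  with S obtain x y where "S = {x, y}" by (blast elim: Apairs_elemE)
  with assms(1) S show "S \<in> Apairs g"
    unfolding Pset_def Hset_def by (simp add: Apairs_iff)
qed

lemma subset_if_Pset_subset:
  assumes "A0 \<in> Ascr" "A \<in> Ascr" "Pset A0 \<subseteq> Pset A"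
  shows "A \<subseteq> A0"
proof -
  obtain g0 where "g0 \<in> Eprime" "A0 = Apairs g0"
    using assms(1) unfolding Ascr_def by blast
  then show ?thesis
    using assms Pset_Apairs_self subset_Apairs_if_Pset by blast
qed

lemma Int_Ascr_iff:
  assumes "A0 \<in> Ascr" "A1 \<in> Ascr"
  shows "A0 \<inter> A1 \<in> Ascr \<longleftrightarrow> \<Union>(A0 \<inter> A1) = UNIV"
proof
  assume cover: "\<Union>(A0 \<inter> A1) = UNIV"
  obtain g0 g1 where g: "g0 \<in> Eprime" "g1 \<in> Eprime" "A0 = Apairs g0" "A1 = Apairs g1"
    using assms unfolding Ascr_def by blast
  define f where "f = (\<lambda>x. (1 - 1/2) * g0 x + 1/2 * g1 x :: real)"
  have "f \<in> Delta" "Apairs f = A0 \<inter> A1"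
    using convex_comb_in_Delta_and_Apairs[OF g(1,2)[THEN Eprime_imp_Delta], of "1/2"] g(3,4)
    unfolding f_def by auto
  with cover have "f \<in> Eprime" unfolding Eprime_def by simp
  with \<open>Apairs f = A0 \<inter> A1\<close> show "A0 \<inter> A1 \<in> Ascr"
    unfolding Ascr_def by blast
qed (rule Union_Ascr)

theorem proposition4p2:
  fixes dummy :: "'a::metric_space"
  shows
  "(\<forall>(f0::'a \<Rightarrow> real) f1 (lam::real).
      f0 \<in> Eprime \<and> f1 \<in> Eprime \<and> 0 < lam \<and> lam < 1 \<longrightarrow>
      (let f = (\<lambda>x. (1 - lam) * f0 x + lam * f1 x) in
        f \<in> Delta \<and> Apairs f = Apairs f0 \<inter> Apairs f1 \<and>
        (f \<in> Eprime \<longleftrightarrow> \<Union>(Apairs f0 \<inter> Apairs f1) = UNIV)))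
   \<and>
   (\<forall>(A0::'a set set) A1. A0 \<in> Ascr \<and> A1 \<in> Ascr \<longrightarrow>
      ((\<exists>A\<in>Ascr. Pset A0 \<union> Pset A1 \<subseteq> Pset A) \<longleftrightarrow> \<Union>(A0 \<inter> A1) = UNIV) \<and>
      (\<Union>(A0 \<inter> A1) = UNIV \<longleftrightarrow> A0 \<inter> A1 \<in> Ascr) \<and>
      (\<forall>A\<in>Ascr. Pset A0 \<union> Pset A1 \<subseteq> Pset A \<longrightarrow>
         Pset A0 \<union> Pset A1 \<subseteq> Pset (A0 \<inter> A1) \<and> Pset (A0 \<inter> A1) \<subseteq> Pset A))"
proof (intro conjI allI impI ballI)
  fix f0 f1 :: "'a \<Rightarrow> real" and lam :: real
  assume "f0 \<in> Eprime \<and> f1 \<in> Eprime \<and> 0 < lam \<and> lam < 1"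
  then show "let f = (\<lambda>x. (1 - lam) * f0 x + lam * f1 x) in
        f \<in> Delta \<and> Apairs f = Apairs f0 \<inter> Apairs f1 \<and>
        (f \<in> Eprime \<longleftrightarrow> \<Union>(Apairs f0 \<inter> Apairs f1) = UNIV)"
    using convex_comb_in_Delta_and_Apairs[of f0 f1 lam] Eprime_imp_Delta
    by (simp add: Let_def Eprime_def)
next
  fix A0 A1 :: "'a set set"
  assume "A0 \<in> Ascr \<and> A1 \<in> Ascr"
  then have A0: "A0 \<in> Ascr" and A1: "A1 \<in> Ascr" by auto
  have P_Int: "Pset A0 \<union> Pset A1 \<subseteq> Pset (A0 \<inter> A1)"
    using Pset_antimono[of "A0 \<inter> A1"] by blast
  have Int_if_P: "A \<subseteq> A0 \<inter> A1" if "A \<in> Ascr" "Pset A0 \<union> Pset A1 \<subseteq> Pset A" for A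
    using that subset_if_Pset_subset[OF A0] subset_if_Pset_subset[OF A1] by blast
  show "\<Union>(A0 \<inter> A1) = UNIV \<longleftrightarrow> A0 \<inter> A1 \<in> Ascr"
    using Int_Ascr_iff[OF A0 A1] by simp
  show "(\<exists>A\<in>Ascr. Pset A0 \<union> Pset A1 \<subseteq> Pset A) \<longleftrightarrow> \<Union>(A0 \<inter> A1) = UNIV"
    using Int_if_P Union_Ascr Int_Ascr_iff[OF A0 A1] P_Int
    by (metis Sup_subset_mono top.extremum_uniqueI)
  show "Pset A0 \<union> Pset A1 \<subseteq> Pset (A0 \<inter> A1)" by (rule P_Int)
  fix A assume "A \<in> Ascr" "Pset A0 \<union> Pset A1 \<subseteq> Pset A"
  then show "Pset (A0 \<inter> A1) \<subseteq> Pset A" by (intro Pset_antimono Int_if_P)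
qed

end
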